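(* Let $\Omega\subset\mathbb{R}^2$ be a bounded domain with smooth boundary, $A\in C^\infty(\overline{\Omega};\mathbb{R}^{2\times 2})$ symmetric and uniformly elliptic, and for $x\in\Omega$ let $\psi_x(y):=A(y)^{-1}(y-x)\cdot(y-x)$. Then there exist $M_0\in C^\infty(\overline\Omega;\mathbb{R}^{2\times2})$ and a Borel measurable, locally bounded $N_0:\Omega\times\Omega\to\mathbb{R}^{2\times2}$, smooth on $\Omega\times\Omega\setminus\{(x,x):x\in\Omega\}$, such that $$D_y^2(\psi_x\log\psi_x)(y)=\tfrac{1}{\sqrt2}\,\mathrm{div}_y\big(A(y)\nabla_y(\psi_x\log\psi_x)(y)\big)M_0(y)+N_0(x,y)\quad\text{for all }(x,y)\in\Omega\times\Omega,\ x\neq y.$$ Moreover, $M_0(x)=\tfrac{1}{\sqrt2}A(x)^{-1}$ for all $x\in\Omega$.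
   Context: Uniform ellipticity: there is $\lambda>0$ with $\lambda|\xi|^2\le A(x)\xi\cdot\xi$. *)

theory Defs
  imports "HOL-Analysis.Analysis"
begin

fun Ck_on :: "nat \<Rightarrow> 'a::euclidean_space set \<Rightarrow> ('a \<Rightarrow> 'b::real_normed_vector) \<Rightarrow> bool" where
  "Ck_on 0 S f = continuous_on S f"
| "Ck_on (Suc k) S f = (f differentiable_on S \<and>
      (\<forall>b\<in>Basis. Ck_on k S (\<lambda>x. frechet_derivative f (at x) b)))"

definition smooth_on :: "'a::euclidean_space set \<Rightarrow> ('a \<Rightarrow> 'b::real_normed_vector) \<Rightarrow> bool" where
  "smooth_on S f \<longleftrightarrow> (\<forall>k. Ck_on k S f)"

definition smooth_on_closure :: "'a::euclidean_space set \<Rightarrow> ('a \<Rightarrow> 'b::real_normed_vector) \<Rightarrow> bool" where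
  "smooth_on_closure \<Omega> f \<longleftrightarrow>
     (\<exists>U g. open U \<and> closure \<Omega> \<subseteq> U \<and> smooth_on U g \<and> (\<forall>x\<in>closure \<Omega>. g x = f x))"

definition smooth_bounded_domain :: "'a::euclidean_space set \<Rightarrow> bool" where
  "smooth_bounded_domain \<Omega> \<longleftrightarrow> open \<Omega> \<and> connected \<Omega> \<and> \<Omega> \<noteq> {} \<and> bounded \<Omega> \<and>
     (\<forall>p\<in>frontier \<Omega>. \<exists>r>0. \<exists>\<phi>::'a \<Rightarrow> real.
        smooth_on (ball p r) \<phi> \<and>
        (\<forall>y\<in>ball p r. frechet_derivative \<phi> (at y) \<noteq> (\<lambda>_. 0)) \<and>
        \<Omega> \<inter> ball p r = {y\<in>ball p r. \<phi> y < 0})"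

definition partial_deriv :: "(real^'n \<Rightarrow> 'b::real_normed_vector) \<Rightarrow> 'n \<Rightarrow> real^'n \<Rightarrow> 'b" where
  "partial_deriv f i x = frechet_derivative f (at x) (axis i 1)"

definition gradient :: "(real^'n \<Rightarrow> real) \<Rightarrow> real^'n \<Rightarrow> real^'n" where
  "gradient f x = (\<chi> j. partial_deriv f j x)"

definition hessian :: "(real^'n \<Rightarrow> real) \<Rightarrow> real^'n \<Rightarrow> real^'n^'n" where
  "hessian f x = (\<chi> i j. partial_deriv (\<lambda>z. partial_deriv f j z) i x)"

definition divergence :: "(real^'n \<Rightarrow> real^'n) \<Rightarrow> real^'n \<Rightarrow> real" where
  "divergence V x = (\<Sum>i\<in>UNIV. partial_deriv (\<lambda>z. V z $ i) i x)"

definition uniformly_elliptic :: "(real^'n) set \<Rightarrow> (real^'n \<Rightarrow> real^'n^'n) \<Rightarrow> bool" where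
  "uniformly_elliptic S A \<longleftrightarrow>
     (\<exists>c>0. \<forall>y\<in>S. \<forall>\<xi>. c * (norm \<xi>)\<^sup>2 \<le> (A y *v \<xi>) \<bullet> \<xi>)"

definition locally_bounded_on :: "'a::metric_space set \<Rightarrow> ('a \<Rightarrow> 'b::real_normed_vector) \<Rightarrow> bool" where
  "locally_bounded_on S f \<longleftrightarrow> (\<forall>p\<in>S. \<exists>r>0. bounded (f ` (ball p r \<inter> S)))"

definition psi :: "(real^2 \<Rightarrow> real^2^2) \<Rightarrow> real^2 \<Rightarrow> real^2 \<Rightarrow> real" where
  "psi A x y = (matrix_inv (A y) *v (y - x)) \<bullet> (y - x)"

end

theory Submission
  imports Defs
begin

(* Write b = A^-1 and d = y - x, so that psi_x(y) = b(y) d . d.  Then D psi_x = O(|d|),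
   D^2 psi_x = b + b^T + O(|d|), and ellipticity gives psi_x ~ |d|^2.  For F = psi_x log psi_x,
   D^2 F = D^2 psi_x (log psi_x + 1) + D psi_x D psi_x^T / psi_x, and since tr (A A^-1) = 2 in
   the plane, div (A grad F) = 4 (log psi_x + 1) + O(1).  So the logarithmic terms cancel in
   N0 = D^2 F - (1/2) div (A grad F) A^-1, which has the form Q / psi_x + R (log psi_x + 1) with
   Q = O(|d|^2) and R = O(|d|).  It is locally bounded because r log r -> 0 as r -> 0, and it
   is smooth off the diagonal because all of its ingredients are. *)

section \<open>Calculus of C^k functions\<close>

lemma Ck_on_has_derivative:
  assumes "Ck_on (Suc k) S f" "open S" "x \<in> S"
  shows "(f has_derivative frechet_derivative f (at x)) (at x)"
  using assms
  by (metis Ck_on.simps(2) at_within_open differentiable_on_def frechet_derivative_works)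

lemma Ck_on_cong:
  assumes "open S" "\<And>x. x \<in> S \<Longrightarrow> f x = g x" "Ck_on k S f"
  shows "Ck_on k S g"
  using assms
proof (induction k arbitrary: f g)
  case 0
  then show ?case using continuous_on_cong by force
next
  case (Suc k)
  have f': "(f has_derivative frechet_derivative f (at x)) (at x)" if "x \<in> S" for x
    by (rule Ck_on_has_derivative[OF Suc.prems(3) \<open>open S\<close> that])
  have g': "(g has_derivative frechet_derivative f (at x)) (at x)" if "x \<in> S" for x
    using has_derivative_transform_within_open[OF f'[OF that] \<open>open S\<close> that] Suc.prems(2) by blast
  have "g differentiable_on S"
    using g' \<open>open S\<close> by (metis at_within_open differentiableI differentiable_on_def)
  moreover have "frechet_derivative g (at x) = frechet_derivative f (at x)" if "x \<in> S" for x
    using g'[OF that] by (rule frechet_derivative_at[symmetric])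
  ultimately show ?case
    using Suc.prems(3) by (auto intro: Suc.IH[OF \<open>open S\<close>])
qed

lemma Ck_on_Suc_imp: "Ck_on (Suc k) S f \<Longrightarrow> Ck_on k S f"
proof (induction k arbitrary: f)
  case 0
  then show ?case by (simp add: differentiable_imp_continuous_on)
next
  case (Suc k)
  then show ?case by (metis Ck_on.simps(2))
qed

lemma Ck_on_SucI:
  assumes "open S" "\<And>x. x \<in> S \<Longrightarrow> (f has_derivative D x) (at x)"
    "\<And>b. b \<in> Basis \<Longrightarrow> Ck_on k S (\<lambda>x. D x b)"
  shows "Ck_on (Suc k) S f"
proof -
  have "f differentiable_on S"
    using assms(1,2) by (metis at_within_open differentiableI differentiable_on_def)
  moreover have "Ck_on k S (\<lambda>x. frechet_derivative f (at x) b)" if "b \<in> Basis" for b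
    by (rule Ck_on_cong[OF assms(1) _ assms(3)[OF that]]) (metis assms(2) frechet_derivative_at)
  ultimately show ?thesis by simp
qed

lemma Ck_on_partial_deriv:
  "Ck_on (Suc k) S f \<Longrightarrow> Ck_on k S (partial_deriv f i)"
  unfolding partial_deriv_def by simp

lemma Ck_on_const: "Ck_on k S (\<lambda>x. c)"
proof (induction k arbitrary: c)
  case (Suc k)
  have "frechet_derivative (\<lambda>x. c) (at x) = (\<lambda>h. 0)" for x
    by (metis frechet_derivative_at has_derivative_const)
  then show ?case using Suc by simp
qed simp

lemma Ck_on_subset:
  assumes "Ck_on k S f" "open S" "open T" "T \<subseteq> S"
  shows "Ck_on k T f"
  using assms(1)
proof (induction k arbitrary: f)
  case 0
  then show ?case using continuous_on_subset assms(4) by auto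
next
  case (Suc k)
  show ?case
    by (rule Ck_on_SucI[OF \<open>open T\<close>, where D="\<lambda>x. frechet_derivative f (at x)"])
       (use Suc assms in \<open>auto intro: Ck_on_has_derivative\<close>)
qed

lemma Ck_on_bounded_linear:
  assumes "bounded_linear l" "open S"
  shows "Ck_on k S l"
proof (cases k)
  case (Suc k')
  show ?thesis unfolding Suc
    by (rule Ck_on_SucI[OF assms(2), where D="\<lambda>x. l"])
       (simp_all add: Ck_on_const bounded_linear_imp_has_derivative[OF assms(1)])
qed (use assms linear_continuous_on in auto)

lemma Ck_on_bounded_linear_compose:
  assumes "bounded_linear l" "Ck_on k S f" "open S"
  shows "Ck_on k S (\<lambda>x. l (f x))"
  using assms(2)
proof (induction k arbitrary: f)
  case 0
  then show ?case
    using continuous_on_compose2[of UNIV l S f] linear_continuous_on[OF assms(1)] by auto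
next
  case (Suc k)
  show ?case
    by (rule Ck_on_SucI[OF \<open>open S\<close>, where D="\<lambda>x h. l (frechet_derivative f (at x) h)"])
       (use Suc assms(3) in \<open>auto intro: bounded_linear.has_derivative[OF assms(1)]
          Ck_on_has_derivative[OF Suc.prems]\<close>)
qed

lemma Ck_on_add:
  assumes "Ck_on k S f" "Ck_on k S g" "open S"
  shows "Ck_on k S (\<lambda>x. f x + g x)"
  using assms(1,2)
proof (induction k arbitrary: f g)
  case 0
  then show ?case by (simp add: continuous_on_add)
next
  case (Suc k)
  show ?case
    by (rule Ck_on_SucI[OF \<open>open S\<close>,
          where D="\<lambda>x h. frechet_derivative f (at x) h + frechet_derivative g (at x) h"])
       (use Suc assms(3) in \<open>auto intro!: Ck_on_has_derivative has_derivative_add\<close>)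
qed

lemma Ck_on_minus:
  "Ck_on k S f \<Longrightarrow> open S \<Longrightarrow> Ck_on k S (\<lambda>x. - f x)"
  by (rule Ck_on_bounded_linear_compose[OF bounded_linear_minus[OF bounded_linear_ident]])

lemma Ck_on_diff:
  assumes "Ck_on k S f" "Ck_on k S g" "open S"
  shows "Ck_on k S (\<lambda>x. f x - g x)"
  using Ck_on_add[OF assms(1) Ck_on_minus[OF assms(2,3)] assms(3)] by simp

lemma Ck_on_sum:
  assumes "\<And>i. i \<in> I \<Longrightarrow> Ck_on k S (f i)" "open S"
  shows "Ck_on k S (\<lambda>x. \<Sum>i\<in>I. f i x)"
  using assms(1)
  by (induction I rule: infinite_finite_induct) (simp_all add: Ck_on_const Ck_on_add assms(2))

lemma Ck_on_mult:
  fixes f g :: "'a::euclidean_space \<Rightarrow> 'b::real_normed_algebra"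
  assumes "Ck_on k S f" "Ck_on k S g" "open S"
  shows "Ck_on k S (\<lambda>x. f x * g x)"
  using assms(1,2)
proof (induction k arbitrary: f g)
  case 0
  then show ?case by (simp add: continuous_on_mult)
next
  case (Suc k)
  have "Ck_on k S f" "Ck_on k S g"
    using Suc.prems Ck_on_Suc_imp by blast+
  then show ?case
    by (intro Ck_on_SucI[OF \<open>open S\<close>,
          where D="\<lambda>x h. f x * frechet_derivative g (at x) h
                    + frechet_derivative f (at x) h * g x"])
       (use Suc assms(3) in \<open>auto intro!: has_derivative_mult Ck_on_has_derivative Ck_on_add\<close>)
qed

lemma Ck_on_inverse:
  fixes f :: "'a::euclidean_space \<Rightarrow> 'b::real_normed_div_algebra"
  assumes "Ck_on k S f" "\<And>x. x \<in> S \<Longrightarrow> f x \<noteq> 0" "open S"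
  shows "Ck_on k S (\<lambda>x. inverse (f x))"
  using assms(1,2)
proof (induction k arbitrary: f)
  case 0
  then show ?case by (auto intro!: continuous_on_inverse)
next
  case (Suc k)
  have "Ck_on k S f" "Ck_on k S (\<lambda>x. inverse (f x))"
    using Suc Ck_on_Suc_imp by blast+
  then have "Ck_on k S (\<lambda>x. - (inverse (f x) * frechet_derivative f (at x) b * inverse (f x)))"
    if "b \<in> Basis" for b
    using Suc.prems that assms(3)
    by (intro Ck_on_minus Ck_on_mult) auto
  then show ?case
    by (intro Ck_on_SucI[OF \<open>open S\<close>,
          where D="\<lambda>x h. - (inverse (f x) * frechet_derivative f (at x) h * inverse (f x))"])
       (use Suc assms(3) in \<open>auto intro!: Deriv.has_derivative_inverse Ck_on_has_derivative\<close>)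
qed

lemma Ck_on_ln:
  fixes f :: "'a::euclidean_space \<Rightarrow> real"
  assumes "Ck_on k S f" "open S" "\<And>x. x \<in> S \<Longrightarrow> f x > 0"
  shows "Ck_on k S (\<lambda>x. ln (f x))"
proof (cases k)
  case 0
  then show ?thesis using assms by (auto intro!: continuous_on_ln simp: less_imp_neq[symmetric])
next
  case (Suc k')
  have f: "Ck_on k' S f"
    using assms(1) Suc Ck_on_Suc_imp by blast
  have "Ck_on k' S (\<lambda>x. inverse (f x))"
    using Ck_on_inverse[OF f _ assms(2)] assms(3) by force
  with f show ?thesis unfolding Suc
    by (intro Ck_on_SucI[OF \<open>open S\<close>,
          where D="\<lambda>x h. inverse (f x) * frechet_derivative f (at x) h"])
       (use assms Suc in \<open>auto intro!: Ck_on_mult has_derivative_ln[THEN has_derivative_eq_rhs]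
          Ck_on_has_derivative simp: mult.commute\<close>)
qed

lemma bounded_linear_axis: "bounded_linear (\<lambda>v::'b::real_normed_vector. axis i v :: 'b^'n)"
proof (rule bounded_linear_intro[where K=1])
  show "norm (axis i x :: 'b^'n) \<le> norm x * 1" for x :: 'b
  proof -
    have "norm (axis i x :: 'b^'n) \<le> (\<Sum>j\<in>UNIV. norm (axis i x $ j))"
      unfolding norm_vec_def by (rule L2_set_le_sum) auto
    also have "\<dots> = norm x"
      by (simp add: axis_def if_distrib cong: if_cong)
    finally show ?thesis by simp
  qed
qed (simp_all add: axis_def vec_eq_iff)

lemma Ck_on_vec_iff:
  fixes f :: "'a::euclidean_space \<Rightarrow> 'b::real_normed_vector^'n"
  assumes "open S"
  shows "Ck_on k S f \<longleftrightarrow> (\<forall>i. Ck_on k S (\<lambda>x. f x $ i))"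
proof
  assume "\<forall>i. Ck_on k S (\<lambda>x. f x $ i)"
  then have "Ck_on k S (\<lambda>x. \<Sum>i\<in>UNIV. axis i (f x $ i))"
    by (intro Ck_on_sum Ck_on_bounded_linear_compose[OF bounded_linear_axis] assms) auto
  moreover have "(\<Sum>i\<in>UNIV. axis i (f x $ i)) = f x" for x
    by (simp add: vec_eq_iff axis_def if_distrib cong: if_cong)
  ultimately show "Ck_on k S f"
    by simp
qed (use Ck_on_bounded_linear_compose[OF bounded_linear_vec_nth _ assms] in blast)

lemma Ck_on_vec_nth:
  fixes f :: "'a::euclidean_space \<Rightarrow> 'b::real_normed_vector^'n"
  assumes "Ck_on k S f" "open S"
  shows "Ck_on k S (\<lambda>x. f x $ i)"
  using assms Ck_on_vec_iff by blast

lemma Ck_on_compose_snd: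
  fixes g :: "'b::euclidean_space \<Rightarrow> 'c::real_normed_vector"
  assumes "Ck_on k T g" "open T" "open S" "snd ` S \<subseteq> T"
  shows "Ck_on k S (\<lambda>p::'a::euclidean_space \<times> 'b. g (snd p))"
  using assms(1)
proof (induction k arbitrary: g)
  case 0
  then show ?case
    using continuous_on_compose2[OF _ continuous_on_snd[OF continuous_on_id] assms(4)] by simp
next
  case (Suc k)
  have g': "(g has_derivative frechet_derivative g (at (snd p))) (at (snd p))" if "p \<in> S" for p
    using Ck_on_has_derivative[OF Suc.prems assms(2)] that assms(4) by blast
  have "Ck_on k S (\<lambda>p. frechet_derivative g (at (snd p)) (snd b))"
    if b: "b \<in> Basis" for b :: "'a \<times> 'b"
  proof (cases "snd b = 0")
    case True
    have z: "frechet_derivative g (at (snd p)) (snd b) = 0" if "p \<in> S" for p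
      using linear_0[OF has_derivative_linear[OF g'[OF that]]] True by simp
    show ?thesis
      by (rule Ck_on_cong[OF assms(3) _ Ck_on_const[of k S 0]]) (simp add: z)
  next
    case False
    then have "snd b \<in> Basis"
      using b by (auto simp: Basis_prod_def)
    then show ?thesis
      using Suc.prems by (auto intro: Suc.IH)
  qed
  then show ?case
  proof (intro Ck_on_SucI[OF assms(3), where D="\<lambda>p h. frechet_derivative g (at (snd p)) (snd h)"])
    fix p assume "p \<in> S"
    show "((\<lambda>p. g (snd p)) has_derivative (\<lambda>h. frechet_derivative g (at (snd p)) (snd h))) (at p)"
      using has_derivative_compose[OF has_derivative_snd[OF has_derivative_ident] g'[OF \<open>p \<in> S\<close>]]
      by simp
  qed
qed

lemma smooth_on_closure_imp_smooth_on:
  assumes "open \<Omega>" "smooth_on_closure \<Omega> f"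
  shows "smooth_on \<Omega> f"
proof -
  obtain U g where U: "open U" "closure \<Omega> \<subseteq> U" "smooth_on U g"
    and g: "\<And>x. x \<in> closure \<Omega> \<Longrightarrow> g x = f x"
    using assms(2) unfolding smooth_on_closure_def by blast
  have "Ck_on k \<Omega> g" for k
  proof (rule Ck_on_subset[OF _ U(1) assms(1)])
    show "Ck_on k U g"
      using U(3) by (simp add: smooth_on_def)
    show "\<Omega> \<subseteq> U"
      using U(2) closure_subset by blast
  qed
  moreover have "g x = f x" if "x \<in> \<Omega>" for x
    using g that closure_subset by blast
  ultimately show ?thesis
    unfolding smooth_on_def using Ck_on_cong[OF assms(1)] by blast
qed

section \<open>Partial derivatives and inverses of 2 x 2 matrices\<close>

lemma partial_deriv_eq:
  "(f has_derivative f') (at y) \<Longrightarrow> partial_deriv f i y = f' (axis i 1)"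
  unfolding partial_deriv_def by (simp add: frechet_derivative_at[symmetric])

lemma partial_deriv_transform_open:
  assumes "open V" "y \<in> V" "\<And>z. z \<in> V \<Longrightarrow> f z = g z" "(g has_derivative g') (at y)"
  shows "partial_deriv f i y = g' (axis i 1)"
proof -
  have "(f has_derivative g') (at y)"
    using has_derivative_transform_within_open[OF assms(4,1,2)] assms(3) by metis
  then show ?thesis
    by (rule partial_deriv_eq)
qed

lemma has_derivative_diff_component:
  "((\<lambda>z. (z - x) $ i) has_derivative (\<lambda>h. h $ i)) F"
proof -
  have "((\<lambda>z. z $ i - x $ i) has_derivative (\<lambda>h. h $ i - 0)) F"
    by (intro has_derivative_diff bounded_linear_imp_has_derivative bounded_linear_vec_nth
        has_derivative_const)
  then show ?thesis
    by simp
qed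

lemma matrix_inv_unique:
  fixes A B :: "'a::semiring_1^'n^'n"
  assumes "A ** B = mat 1" "B ** A = mat 1"
  shows "matrix_inv A = B"
proof -
  have "matrix_inv A ** A = mat 1"
    unfolding matrix_inv_def by (rule someI2[of _ B]) (use assms in auto)
  then have "matrix_inv A = matrix_inv A ** (A ** B)"
    by (simp add: assms(1) matrix_mul_rid)
  also have "\<dots> = B"
    by (simp add: matrix_mul_assoc \<open>matrix_inv A ** A = mat 1\<close> matrix_mul_lid)
  finally show ?thesis .
qed

lemma matrix_mult_matrix_inv:
  fixes M :: "real^'n^'n"
  assumes "det M \<noteq> 0"
  shows "M ** matrix_inv M = mat 1"
  using assms unfolding matrix_inv_def invertible_det_nz[symmetric] invertible_def
  by (rule someI2_ex) auto

definition adjugate2 :: "'a::comm_ring_1^2^2 \<Rightarrow> 'a^2^2" where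
  "adjugate2 M = (\<chi> i j. if i = 1 then (if j = 1 then M$2$2 else - M$1$2)
                          else (if j = 1 then - M$2$1 else M$1$1))"

lemma adjugate2_mult:
  fixes M :: "'a::comm_ring_1^2^2"
  shows "M ** adjugate2 M = mat (det M)" "adjugate2 M ** M = mat (det M)"
  by (simp_all add: det_2 vec_eq_iff matrix_matrix_mult_def sum_2 forall_2 adjugate2_def mat_def
      algebra_simps)

lemma matrix_inv_2x2:
  fixes M :: "real^2^2"
  assumes "det M \<noteq> 0"
  shows "matrix_inv M = (1 / det M) *\<^sub>R adjugate2 M"
proof (rule matrix_inv_unique)
  have "(1 / det M) *\<^sub>R mat (det M) = (mat 1 :: real^2^2)"
    using assms by (simp add: vec_eq_iff mat_def)
  then show "M ** ((1 / det M) *\<^sub>R adjugate2 M) = mat 1" "(1 / det M) *\<^sub>R adjugate2 M ** M = mat 1"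
    by (simp_all add: matrix_scalar_ac scalar_matrix_assoc[symmetric] adjugate2_mult)
qed

lemma det_neq_0_if_coercive:
  fixes M :: "real^'n^'n"
  assumes "c > 0" "\<And>\<xi>. c * (norm \<xi>)\<^sup>2 \<le> (M *v \<xi>) \<bullet> \<xi>"
  shows "det M \<noteq> 0"
proof -
  have "\<xi> = 0" if "M *v \<xi> = 0" for \<xi>
    using assms(2)[of \<xi>] that assms(1) by (simp add: mult_le_0_iff)
  then show ?thesis
    by (metis invertible_det_nz invertible_left_inverse matrix_left_invertible_ker)
qed

lemma uniformly_elliptic_subset:
  "uniformly_elliptic T A \<Longrightarrow> S \<subseteq> T \<Longrightarrow> uniformly_elliptic S A"
  unfolding uniformly_elliptic_def by blast

lemma Ck_on_matrix_inv_2x2: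
  fixes G :: "'a::euclidean_space \<Rightarrow> real^2^2"
  assumes "Ck_on k S G" "open S" "\<And>y. y \<in> S \<Longrightarrow> det (G y) \<noteq> 0"
  shows "Ck_on k S (\<lambda>y. matrix_inv (G y))"
proof -
  have entry: "Ck_on k S (\<lambda>y. G y $ i $ j)" for i j
    using assms(1,2) by (intro Ck_on_vec_nth)
  have "Ck_on k S (\<lambda>y. det (G y))"
    unfolding det_2 by (intro Ck_on_diff Ck_on_mult entry assms(2))
  then have "Ck_on k S (\<lambda>y. inverse (det (G y)) * adjugate2 (G y) $ i $ j)" for i j
    by (cases "i = 1"; cases "j = 1")
       (auto simp: adjugate2_def intro!: Ck_on_minus Ck_on_mult Ck_on_inverse entry assms)
  then have "Ck_on k S (\<lambda>y. (1 / det (G y)) *\<^sub>R adjugate2 (G y))"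
    by (simp add: Ck_on_vec_iff assms(2) divide_inverse)
  then show ?thesis
    by (rule Ck_on_cong[OF assms(2), rotated]) (simp add: matrix_inv_2x2 assms(3))
qed

lemma smooth_on_closure_matrix_inv_2x2:
  fixes A :: "'a::euclidean_space \<Rightarrow> real^2^2"
  assumes "smooth_on_closure \<Omega> A" "\<And>y. y \<in> closure \<Omega> \<Longrightarrow> det (A y) \<noteq> 0"
  shows "smooth_on_closure \<Omega> (\<lambda>y. c *\<^sub>R matrix_inv (A y))"
proof -
  obtain U g where U: "open U" "closure \<Omega> \<subseteq> U" "\<And>k. Ck_on k U g"
    and g: "\<And>x. x \<in> closure \<Omega> \<Longrightarrow> g x = A x"
    using assms(1) unfolding smooth_on_closure_def smooth_on_def by blast
  define V where "V = U \<inter> (\<lambda>y. det (g y)) -` (- {0})"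
  have "Ck_on 0 U (\<lambda>y. g y $ i $ j)" for i j
    using U(1) by (intro Ck_on_vec_nth U(3))
  then have "continuous_on U (\<lambda>y. det (g y))"
    unfolding det_2 by (intro continuous_on_diff continuous_on_mult) simp_all
  then have "open V"
    unfolding V_def using U(1) by (rule continuous_open_preimage) auto
  have "V \<subseteq> U" and det_V: "\<And>y. y \<in> V \<Longrightarrow> det (g y) \<noteq> 0"
    by (auto simp: V_def)
  have "closure \<Omega> \<subseteq> V"
    using U(2) g assms(2) by (auto simp: V_def)
  moreover have "Ck_on k V (\<lambda>y. c *\<^sub>R matrix_inv (g y))" for k
    using Ck_on_matrix_inv_2x2[OF Ck_on_subset[OF U(3) U(1) \<open>open V\<close> \<open>V \<subseteq> U\<close>] \<open>open V\<close> det_V]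
    by (rule Ck_on_bounded_linear_compose[OF bounded_linear_scaleR_right _ \<open>open V\<close>])
  ultimately show ?thesis
    unfolding smooth_on_closure_def smooth_on_def using \<open>open V\<close> g
    by (intro exI[of _ V] exI[of _ "\<lambda>y. c *\<^sub>R matrix_inv (g y)"]) auto
qed

section \<open>Functions of order |x - y|^m near the diagonal\<close>

definition diag_bigo ::
    "('a::metric_space \<times> 'a) set \<Rightarrow> nat \<Rightarrow> ('a \<times> 'a \<Rightarrow> 'b::real_normed_vector) \<Rightarrow> bool"
  where "diag_bigo S m f \<longleftrightarrow>
    (\<forall>p\<in>S. \<exists>C. \<forall>\<^sub>F q in nhds p. q \<in> S \<longrightarrow> norm (f q) \<le> C * dist (fst q) (snd q) ^ m)"

lemma eventually_dist_fst_snd_less: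
  "\<forall>\<^sub>F q in nhds p. dist (fst q) (snd q) < dist (fst p) (snd p) + 1"
proof -
  have "((\<lambda>q. dist (fst q) (snd q)) \<longlongrightarrow> dist (fst p) (snd p)) (nhds p)"
    by (intro tendsto_dist tendsto_fst tendsto_snd filterlim_ident)
  then show ?thesis
    by (rule order_tendstoD) simp
qed

lemma diag_bigo_zero: "diag_bigo S m (\<lambda>q. 0)"
  unfolding diag_bigo_def by (auto intro!: exI[of _ 0])

lemma diag_bigo_add:
  assumes "diag_bigo S m f" "diag_bigo S m g"
  shows "diag_bigo S m (\<lambda>q. f q + g q)"
  unfolding diag_bigo_def
proof
  fix p assume "p \<in> S"
  then obtain C D where
    "\<forall>\<^sub>F q in nhds p. q \<in> S \<longrightarrow> norm (f q) \<le> C * dist (fst q) (snd q) ^ m"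
    "\<forall>\<^sub>F q in nhds p. q \<in> S \<longrightarrow> norm (g q) \<le> D * dist (fst q) (snd q) ^ m"
    using assms unfolding diag_bigo_def by blast
  then have "\<forall>\<^sub>F q in nhds p. q \<in> S \<longrightarrow> norm (f q + g q) \<le> (C + D) * dist (fst q) (snd q) ^ m"
    by eventually_elim (auto simp: distrib_right intro: norm_triangle_le)
  then show "\<exists>C. \<forall>\<^sub>F q in nhds p. q \<in> S \<longrightarrow> norm (f q + g q) \<le> C * dist (fst q) (snd q) ^ m" ..
qed

lemma diag_bigo_minus: "diag_bigo S m f \<Longrightarrow> diag_bigo S m (\<lambda>q. - f q)"
  unfolding diag_bigo_def by simp

lemma diag_bigo_diff:
  "diag_bigo S m f \<Longrightarrow> diag_bigo S m g \<Longrightarrow> diag_bigo S m (\<lambda>q. f q - g q)"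
  using diag_bigo_add[OF _ diag_bigo_minus] by fastforce

lemma diag_bigo_sum:
  "(\<And>i. i \<in> I \<Longrightarrow> diag_bigo S m (f i)) \<Longrightarrow> diag_bigo S m (\<lambda>q. \<Sum>i\<in>I. f i q)"
  by (induction I rule: infinite_finite_induct) (simp_all add: diag_bigo_zero diag_bigo_add)

lemma diag_bigo_mult:
  fixes f g :: "'a::metric_space \<times> 'a \<Rightarrow> 'b::real_normed_algebra"
  assumes "diag_bigo S m f" "diag_bigo S n g"
  shows "diag_bigo S (m + n) (\<lambda>q. f q * g q)"
  unfolding diag_bigo_def
proof
  fix p assume "p \<in> S"
  then obtain C D where
    "\<forall>\<^sub>F q in nhds p. q \<in> S \<longrightarrow> norm (f q) \<le> C * dist (fst q) (snd q) ^ m"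
    "\<forall>\<^sub>F q in nhds p. q \<in> S \<longrightarrow> norm (g q) \<le> D * dist (fst q) (snd q) ^ n"
    using assms unfolding diag_bigo_def by blast
  then have "\<forall>\<^sub>F q in nhds p. q \<in> S \<longrightarrow>
      norm (f q * g q) \<le> (C * D) * dist (fst q) (snd q) ^ (m + n)"
  proof eventually_elim
    case (elim q)
    show ?case
    proof
      assume "q \<in> S"
      have "norm (f q * g q) \<le> norm (f q) * norm (g q)"
        by (rule norm_mult_ineq)
      also have "\<dots> \<le> (C * dist (fst q) (snd q) ^ m) * (D * dist (fst q) (snd q) ^ n)"
        using elim \<open>q \<in> S\<close> by (intro mult_mono) (auto intro: order_trans[OF norm_ge_zero])
      also have "\<dots> = (C * D) * dist (fst q) (snd q) ^ (m + n)"
        by (simp add: power_add algebra_simps)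
      finally show "norm (f q * g q) \<le> (C * D) * dist (fst q) (snd q) ^ (m + n)" .
    qed
  qed
  then show "\<exists>C. \<forall>\<^sub>F q in nhds p. q \<in> S \<longrightarrow> norm (f q * g q) \<le> C * dist (fst q) (snd q) ^ (m + n)" ..
qed

lemma diag_bigo_Suc_imp:
  assumes "diag_bigo S (Suc m) f"
  shows "diag_bigo S m f"
  unfolding diag_bigo_def
proof
  fix p assume "p \<in> S"
  then obtain C where
    "\<forall>\<^sub>F q in nhds p. q \<in> S \<longrightarrow> norm (f q) \<le> C * dist (fst q) (snd q) ^ Suc m"
    using assms unfolding diag_bigo_def by blast
  with eventually_dist_fst_snd_less[of p]
  have "\<forall>\<^sub>F q in nhds p. q \<in> S \<longrightarrow>
      norm (f q) \<le> (\<bar>C\<bar> * (dist (fst p) (snd p) + 1)) * dist (fst q) (snd q) ^ m"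
  proof eventually_elim
    case (elim q)
    let ?r = "dist (fst q) (snd q)"
    have "C * ?r ^ Suc m \<le> (\<bar>C\<bar> * ?r) * ?r ^ m"
      by (simp add: mult_right_mono mult.assoc)
    also have "\<dots> \<le> (\<bar>C\<bar> * (dist (fst p) (snd p) + 1)) * ?r ^ m"
      using elim(1) by (intro mult_right_mono mult_left_mono) auto
    finally show ?case
      using elim(2) by auto
  qed
  then show "\<exists>C. \<forall>\<^sub>F q in nhds p. q \<in> S \<longrightarrow> norm (f q) \<le> C * dist (fst q) (snd q) ^ m" ..
qed

lemma diag_bigo_mono:
  assumes "diag_bigo S n f" "m \<le> n"
  shows "diag_bigo S m f"
  using assms(2,1) by (induction rule: dec_induct) (auto intro: diag_bigo_Suc_imp)

lemma diag_bigo_continuous: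
  assumes "continuous_on S f"
  shows "diag_bigo S 0 f"
  unfolding diag_bigo_def
proof
  fix p assume "p \<in> S"
  then have "\<forall>\<^sub>F q in at p within S. dist (f q) (f p) < 1"
    using assms unfolding continuous_on_def by (auto intro: tendstoD)
  then have "\<forall>\<^sub>F q in nhds p. q \<in> S \<longrightarrow> norm (f q) \<le> (norm (f p) + 1) * dist (fst q) (snd q) ^ 0"
    unfolding eventually_at_filter
  proof eventually_elim
    case (elim q)
    have "norm (f q) \<le> norm (f p) + dist (f q) (f p)"
      using norm_triangle_ineq2[of "f q" "f p"] by (simp add: dist_norm)
    then show ?case
      using elim by (cases "q = p") auto
  qed
  then show "\<exists>C. \<forall>\<^sub>F q in nhds p. q \<in> S \<longrightarrow> norm (f q) \<le> C * dist (fst q) (snd q) ^ 0" ..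
qed

lemma diag_bigo_compose_snd:
  assumes "continuous_on T g" "snd ` S \<subseteq> T"
  shows "diag_bigo S 0 (\<lambda>q. g (snd q))"
  by (rule diag_bigo_continuous[OF
        continuous_on_compose2[OF assms(1) continuous_on_snd[OF continuous_on_id] assms(2)]])

lemma diag_bigo_diff_component:
  "diag_bigo (S :: ((real^'n) \<times> (real^'n)) set) 1 (\<lambda>q. (snd q - fst q) $ i)"
  unfolding diag_bigo_def
proof (intro ballI exI[of _ 1] always_eventually allI impI)
  fix q :: "(real^'n) \<times> (real^'n)"
  have "\<bar>(snd q - fst q) $ i\<bar> \<le> norm (snd q - fst q)"
    by (rule component_le_norm_cart)
  then show "norm ((snd q - fst q) $ i) \<le> 1 * dist (fst q) (snd q) ^ 1"
    by (simp add: dist_norm norm_minus_commute)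
qed

lemma diag_bigo_linear_form:
  fixes S :: "((real^'n) \<times> (real^'n)) set"
  assumes "\<And>a. diag_bigo S 0 (\<beta> a)"
  shows "diag_bigo S 1 (\<lambda>q. \<Sum>a\<in>UNIV. \<beta> a q * (snd q - fst q) $ a)"
  using diag_bigo_mult[OF assms diag_bigo_diff_component] by (simp add: diag_bigo_sum)

lemma diag_bigo_quadratic_form:
  fixes S :: "((real^'n) \<times> (real^'n)) set"
  assumes "\<And>a c. diag_bigo S 0 (\<beta> a c)"
  shows "diag_bigo S 2 (\<lambda>q. \<Sum>a\<in>UNIV. \<Sum>c\<in>UNIV. \<beta> a c q * (snd q - fst q) $ c * (snd q - fst q) $ a)"
proof -
  have "diag_bigo S 2 (\<lambda>q. \<beta> a c q * (snd q - fst q) $ c * (snd q - fst q) $ a)" for a c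
    using diag_bigo_mult[OF diag_bigo_mult[OF assms[of a c] diag_bigo_diff_component[of S c]]
        diag_bigo_diff_component[of S a]]
    by (simp add: numeral_2_eq_2)
  then show ?thesis
    by (intro diag_bigo_sum)
qed

lemma diag_bigo_vec:
  fixes f :: "'a::metric_space \<times> 'a \<Rightarrow> 'b::real_normed_vector^'n"
  assumes "\<And>i. diag_bigo S m (\<lambda>q. f q $ i)"
  shows "diag_bigo S m f"
  unfolding diag_bigo_def
proof
  fix p assume "p \<in> S"
  then have "\<forall>i. \<exists>C. \<forall>\<^sub>F q in nhds p. q \<in> S \<longrightarrow> norm (f q $ i) \<le> C * dist (fst q) (snd q) ^ m"
    using assms unfolding diag_bigo_def by blast
  then obtain C where "\<forall>i. \<forall>\<^sub>F q in nhds p. q \<in> S \<longrightarrow> norm (f q $ i) \<le> C i * dist (fst q) (snd q) ^ m"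
    by (auto dest: choice)
  then have "\<forall>\<^sub>F q in nhds p. \<forall>i. q \<in> S \<longrightarrow> norm (f q $ i) \<le> C i * dist (fst q) (snd q) ^ m"
    by (intro eventually_all_finite) blast
  then have "\<forall>\<^sub>F q in nhds p. q \<in> S \<longrightarrow> norm (f q) \<le> (\<Sum>i\<in>UNIV. C i) * dist (fst q) (snd q) ^ m"
  proof eventually_elim
    case (elim q)
    show ?case
    proof
      assume "q \<in> S"
      have "norm (f q) \<le> (\<Sum>i\<in>UNIV. norm (f q $ i))"
        unfolding norm_vec_def by (rule L2_set_le_sum) auto
      also have "\<dots> \<le> (\<Sum>i\<in>UNIV. C i * dist (fst q) (snd q) ^ m)"
        using elim \<open>q \<in> S\<close> by (intro sum_mono) auto
      finally show "norm (f q) \<le> (\<Sum>i\<in>UNIV. C i) * dist (fst q) (snd q) ^ m"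
        by (simp add: sum_distrib_right)
    qed
  qed
  then show "\<exists>C. \<forall>\<^sub>F q in nhds p. q \<in> S \<longrightarrow> norm (f q) \<le> C * dist (fst q) (snd q) ^ m" ..
qed

lemma locally_bounded_on_if_diag_bigo:
  assumes "diag_bigo S 0 f"
  shows "locally_bounded_on S f"
  unfolding locally_bounded_on_def
proof
  fix p assume "p \<in> S"
  then obtain C where "\<forall>\<^sub>F q in nhds p. q \<in> S \<longrightarrow> norm (f q) \<le> C"
    using assms unfolding diag_bigo_def by auto
  then obtain d where "d > 0" and d: "\<And>q. dist q p < d \<Longrightarrow> q \<in> S \<Longrightarrow> norm (f q) \<le> C"
    unfolding eventually_nhds_metric by blast
  have "norm (f q) \<le> C" if "q \<in> ball p d \<inter> S" for q
    using d that by (simp add: dist_commute)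
  then have "bounded (f ` (ball p d \<inter> S))"
    unfolding bounded_iff by blast
  with \<open>d > 0\<close> show "\<exists>r>0. bounded (f ` (ball p r \<inter> S))"
    by blast
qed

lemma mult_abs_ln_le:
  fixes r :: real
  assumes "0 < r"
  shows "r * \<bar>ln r\<bar> \<le> 1 + r\<^sup>2"
proof (cases "1 \<le> r")
  case True
  then have "\<bar>ln r\<bar> \<le> r"
    using ln_le_minus_one[OF assms] by simp
  then show ?thesis
    using assms by (smt (verit) mult_left_mono power2_eq_square)
next
  case False
  have "- ln r \<le> 1 / r - 1"
    using ln_le_minus_one[of "1 / r"] assms by (simp add: ln_div)
  then have "r * \<bar>ln r\<bar> \<le> r * (1 / r)"
    using False assms by (intro mult_left_mono) auto
  moreover have "r * (1 / r) = 1"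
    using assms by simp
  ultimately show ?thesis
    by (smt (verit) zero_le_power2)
qed

lemma mult_abs_ln_le_of_quadratic_bounds:
  fixes c U r s R :: real
  assumes "0 < c" "0 < r" "r \<le> R" "c * r\<^sup>2 \<le> s" "s \<le> U * r\<^sup>2"
  shows "r * \<bar>ln s + 1\<bar> \<le> R * (\<bar>ln c\<bar> + \<bar>ln U\<bar> + 1) + 2 * (1 + R\<^sup>2)"
proof -
  have "0 < r\<^sup>2" "0 < c * r\<^sup>2"
    using assms by simp_all
  have "c * r\<^sup>2 \<le> U * r\<^sup>2"
    using assms(4,5) by linarith
  then have "c \<le> U"
    using \<open>0 < r\<^sup>2\<close> by (rule mult_right_le_imp_le)
  have "0 < s"
    using \<open>0 < c * r\<^sup>2\<close> assms(4) by linarith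
  have "ln (c * r\<^sup>2) \<le> ln s" "ln s \<le> ln (U * r\<^sup>2)"
    using assms \<open>0 < c * r\<^sup>2\<close> \<open>0 < s\<close> by simp_all
  moreover have "ln (c * r\<^sup>2) = ln c + 2 * ln r" "ln (U * r\<^sup>2) = ln U + 2 * ln r"
    using assms \<open>c \<le> U\<close> by (simp_all add: ln_mult ln_realpow)
  ultimately have "ln c + 2 * ln r \<le> ln s" "ln s \<le> ln U + 2 * ln r"
    by simp_all
  then have "\<bar>ln s + 1\<bar> \<le> (\<bar>ln c\<bar> + \<bar>ln U\<bar> + 1) + 2 * \<bar>ln r\<bar>"
    by linarith
  then have "r * \<bar>ln s + 1\<bar> \<le> r * (\<bar>ln c\<bar> + \<bar>ln U\<bar> + 1) + 2 * (r * \<bar>ln r\<bar>)"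
    using mult_left_mono[of _ _ r] assms(2) by (fastforce simp: algebra_simps)
  also have "\<dots> \<le> R * (\<bar>ln c\<bar> + \<bar>ln U\<bar> + 1) + 2 * (1 + R\<^sup>2)"
  proof -
    have "r\<^sup>2 \<le> R\<^sup>2"
      using assms(2,3) by (simp add: power_mono)
    then have "2 * (r * \<bar>ln r\<bar>) \<le> 2 * (1 + R\<^sup>2)"
      using mult_abs_ln_le[OF assms(2)] by simp
    moreover have "r * (\<bar>ln c\<bar> + \<bar>ln U\<bar> + 1) \<le> R * (\<bar>ln c\<bar> + \<bar>ln U\<bar> + 1)"
      using assms(3) by (intro mult_right_mono) auto
    ultimately show ?thesis
      by linarith
  qed
  finally show ?thesis .
qed

lemma log_quotient_bound:
  fixes a b c U r s R C1 C2 :: real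
  assumes "0 < c" "0 < r" "r \<le> R" "c * r\<^sup>2 \<le> s" "s \<le> U * r\<^sup>2"
    and "\<bar>a\<bar> \<le> C2 * r\<^sup>2" "\<bar>b\<bar> \<le> C1 * r"
  shows "\<bar>a / s + b * (ln s + 1)\<bar> \<le> \<bar>C2\<bar> / c + \<bar>C1\<bar> * (R * (\<bar>ln c\<bar> + \<bar>ln U\<bar> + 1) + 2 * (1 + R\<^sup>2))"
proof -
  have "0 < s"
    using assms(1,2,4) by (smt (verit) mult_pos_pos zero_less_power)
  have "\<bar>a\<bar> * c \<le> \<bar>C2\<bar> * r\<^sup>2 * c"
    using assms(1,6) by (intro mult_right_mono) (auto intro: order_trans[OF _ mult_right_mono])
  also have "\<dots> \<le> \<bar>C2\<bar> * s"
    using mult_left_mono[OF assms(4), of "\<bar>C2\<bar>"] by (simp add: algebra_simps)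
  finally have quotient: "\<bar>a / s\<bar> \<le> \<bar>C2\<bar> / c"
    using \<open>0 < s\<close> assms(1) by (simp add: field_simps abs_div)
  have "\<bar>b\<bar> \<le> \<bar>C1\<bar> * r"
    using assms(7) mult_right_mono[OF abs_ge_self, of r C1] assms(2) by linarith
  then have "\<bar>b * (ln s + 1)\<bar> \<le> (\<bar>C1\<bar> * r) * \<bar>ln s + 1\<bar>"
    by (simp add: abs_mult mult_right_mono)
  also have "\<dots> \<le> \<bar>C1\<bar> * (R * (\<bar>ln c\<bar> + \<bar>ln U\<bar> + 1) + 2 * (1 + R\<^sup>2))"
    using mult_abs_ln_le_of_quadratic_bounds[OF assms(1-5)]
    by (simp add: mult.assoc mult_left_mono)
  finally show ?thesis
    using quotient by linarith
qed

lemma diag_bigo_log_quotient: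
  fixes f a b s :: "'a::metric_space \<times> 'a \<Rightarrow> real"
  assumes f: "\<And>q. q \<in> S \<Longrightarrow> f q = (if fst q = snd q then 0 else a q / s q + b q * (ln (s q) + 1))"
    and "diag_bigo S 2 a" "diag_bigo S 1 b" "diag_bigo S 2 s"
    and s_lower: "\<And>p. p \<in> S \<Longrightarrow> \<exists>c>0. \<forall>\<^sub>F q in nhds p. q \<in> S \<longrightarrow> c * dist (fst q) (snd q) ^ 2 \<le> s q"
  shows "diag_bigo S 0 f"
  unfolding diag_bigo_def
proof
  fix p assume "p \<in> S"
  obtain C2 C1 U where
    "\<forall>\<^sub>F q in nhds p. q \<in> S \<longrightarrow> \<bar>a q\<bar> \<le> C2 * dist (fst q) (snd q) ^ 2"
    "\<forall>\<^sub>F q in nhds p. q \<in> S \<longrightarrow> \<bar>b q\<bar> \<le> C1 * dist (fst q) (snd q) ^ 1"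
    "\<forall>\<^sub>F q in nhds p. q \<in> S \<longrightarrow> \<bar>s q\<bar> \<le> U * dist (fst q) (snd q) ^ 2"
    using assms(2-4) \<open>p \<in> S\<close> unfolding diag_bigo_def real_norm_def by blast
  moreover obtain c where c: "0 < c" "\<forall>\<^sub>F q in nhds p. q \<in> S \<longrightarrow> c * dist (fst q) (snd q) ^ 2 \<le> s q"
    using s_lower[OF \<open>p \<in> S\<close>] by blast
  note c(2)
  moreover note eventually_dist_fst_snd_less[of p]
  ultimately have "\<forall>\<^sub>F q in nhds p. q \<in> S \<longrightarrow> norm (f q) \<le>
      (\<bar>C2\<bar> / c + \<bar>C1\<bar> * ((dist (fst p) (snd p) + 1) * (\<bar>ln c\<bar> + \<bar>ln U\<bar> + 1)
        + 2 * (1 + (dist (fst p) (snd p) + 1)\<^sup>2))) * dist (fst q) (snd q) ^ 0"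
  proof eventually_elim
    case (elim q)
    show ?case
    proof
      assume "q \<in> S"
      show "norm (f q) \<le> (\<bar>C2\<bar> / c + \<bar>C1\<bar> * ((dist (fst p) (snd p) + 1) * (\<bar>ln c\<bar> + \<bar>ln U\<bar> + 1)
        + 2 * (1 + (dist (fst p) (snd p) + 1)\<^sup>2))) * dist (fst q) (snd q) ^ 0"
      proof (cases "fst q = snd q")
        case True
        then show ?thesis
          using f[OF \<open>q \<in> S\<close>] c(1) by simp
      next
        case False
        then have "norm (f q) = \<bar>a q / s q + b q * (ln (s q) + 1)\<bar>"
          using f[OF \<open>q \<in> S\<close>] by simp
        also have "\<dots> \<le> \<bar>C2\<bar> / c + \<bar>C1\<bar> * ((dist (fst p) (snd p) + 1) * (\<bar>ln c\<bar> + \<bar>ln U\<bar> + 1)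
            + 2 * (1 + (dist (fst p) (snd p) + 1)\<^sup>2))"
          using elim \<open>q \<in> S\<close> False by (intro log_quotient_bound[OF c(1)]) auto
        finally show ?thesis
          by simp
      qed
    qed
  qed
  then show "\<exists>C. \<forall>\<^sub>F q in nhds p. q \<in> S \<longrightarrow> norm (f q) \<le> C * dist (fst q) (snd q) ^ 0" ..
qed

section \<open>The second derivatives of psi_x log psi_x\<close>

text \<open>For \<open>a = A y\<close> and \<open>b = a\<^sup>-\<^sup>1\<close> the second hypothesis is \<open>2 tr (a b) = 4\<close>, which holds
  because the dimension is two; it makes the logarithmic term \<open>2 b i j L\<close> of the Hessian cancel
  against that of \<open>1/2 b i j\<close> times the divergence.\<close>

lemma log_singularity_cancellation:
  fixes a b d R :: "2 \<Rightarrow> 2 \<Rightarrow> real" and P :: "2 \<Rightarrow> real" and s L :: real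
  assumes "b j i = b i j" "(\<Sum>k\<in>UNIV. \<Sum>l\<in>UNIV. a k l * (b k l + b l k)) = 4" "s \<noteq> 0"
  shows "(b i j + b j i + R i j) * L + P j * P i / s - 1 / 2 * b i j *
      (\<Sum>k\<in>UNIV. \<Sum>l\<in>UNIV. d k l * P l * L + a k l * ((b k l + b l k + R k l) * L + P l * P k / s))
    = (P i * P j - b i j / 2 * (\<Sum>k\<in>UNIV. \<Sum>l\<in>UNIV. a k l * P l * P k)) / s
      + (R i j - b i j / 2 * (\<Sum>k\<in>UNIV. \<Sum>l\<in>UNIV. a k l * R k l + d k l * P l)) * L"
    (is "_ - _ * ?div = _")
proof -
  have "?div = L * (\<Sum>k\<in>UNIV. \<Sum>l\<in>UNIV. a k l * (b k l + b l k))
      + L * (\<Sum>k\<in>UNIV. \<Sum>l\<in>UNIV. a k l * R k l + d k l * P l)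
      + (\<Sum>k\<in>UNIV. \<Sum>l\<in>UNIV. a k l * P l * P k) / s"
    by (simp add: sum_2 algebra_simps add_divide_distrib)
  then have divergence: "?div = 4 * L + L * (\<Sum>k\<in>UNIV. \<Sum>l\<in>UNIV. a k l * R k l + d k l * P l)
      + (\<Sum>k\<in>UNIV. \<Sum>l\<in>UNIV. a k l * P l * P k) / s"
    using assms(2) by simp
  show ?thesis
    unfolding divergence using assms(1,3) by (simp add: field_simps)
qed

locale elliptic_field =
  fixes \<Omega> :: "(real^2) set" and A :: "real^2 \<Rightarrow> real^2^2"
  assumes open_domain: "open \<Omega>"
    and smooth_A: "smooth_on \<Omega> A"
    and symmetric_A: "\<And>y. y \<in> \<Omega> \<Longrightarrow> transpose (A y) = A y"
    and elliptic_A: "uniformly_elliptic \<Omega> A"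
begin

abbreviation psi_log_psi :: "real^2 \<Rightarrow> real^2 \<Rightarrow> real" where
  "psi_log_psi x \<equiv> \<lambda>z. psi A x z * ln (psi A x z)"

lemma Ck_A_entry: "Ck_on k \<Omega> (\<lambda>y. A y $ i $ j)"
  using smooth_A open_domain by (simp add: smooth_on_def Ck_on_vec_iff)

lemma det_A_neq_0: "y \<in> \<Omega> \<Longrightarrow> det (A y) \<noteq> 0"
  using elliptic_A unfolding uniformly_elliptic_def by (metis det_neq_0_if_coercive)

definition B :: "2 \<Rightarrow> 2 \<Rightarrow> real^2 \<Rightarrow> real" where
  "B a c y = matrix_inv (A y) $ a $ c"

definition dB :: "2 \<Rightarrow> 2 \<Rightarrow> 2 \<Rightarrow> real^2 \<Rightarrow> real" where
  "dB j a c = partial_deriv (B a c) j"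

definition ddB :: "2 \<Rightarrow> 2 \<Rightarrow> 2 \<Rightarrow> 2 \<Rightarrow> real^2 \<Rightarrow> real" where
  "ddB i j a c = partial_deriv (dB j a c) i"

definition dA :: "2 \<Rightarrow> 2 \<Rightarrow> real^2 \<Rightarrow> real" where
  "dA i k = partial_deriv (\<lambda>y. A y $ i $ k) i"

lemma Ck_B: "Ck_on k \<Omega> (B a c)"
proof -
  have "Ck_on k \<Omega> (\<lambda>y. matrix_inv (A y))"
    using smooth_A open_domain det_A_neq_0 by (simp add: smooth_on_def Ck_on_matrix_inv_2x2)
  then show ?thesis
    unfolding B_def using open_domain by (simp add: Ck_on_vec_iff)
qed

lemma Ck_dB: "Ck_on k \<Omega> (dB j a c)"
  unfolding dB_def by (rule Ck_on_partial_deriv[OF Ck_B])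

lemma Ck_ddB: "Ck_on k \<Omega> (ddB i j a c)"
  unfolding ddB_def by (rule Ck_on_partial_deriv[OF Ck_dB])

lemma Ck_dA: "Ck_on k \<Omega> (dA i j)"
  unfolding dA_def by (rule Ck_on_partial_deriv[OF Ck_A_entry])

lemma B_symmetric:
  assumes "y \<in> \<Omega>"
  shows "B a c y = B c a y"
proof -
  have "A y $ 1 $ 2 = A y $ 2 $ 1"
    using arg_cong[OF symmetric_A[OF assms], of "\<lambda>M. M $ 2 $ 1"] by (simp add: transpose_def)
  then show ?thesis
    using exhaust_2[of a] exhaust_2[of c]
    by (auto simp: B_def matrix_inv_2x2[OF det_A_neq_0[OF assms]] adjugate2_def)
qed

lemma trace_A_B:
  assumes "y \<in> \<Omega>"
  shows "(\<Sum>k\<in>UNIV. \<Sum>l\<in>UNIV. A y $ k $ l * (B k l y + B l k y)) = 4"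
proof -
  have diagonal: "(\<Sum>l\<in>UNIV. A y $ k $ l * B l k y) = 1" for k
    using arg_cong[OF matrix_mult_matrix_inv[OF det_A_neq_0[OF assms]], of "\<lambda>M. M $ k $ k"]
    by (simp add: B_def matrix_matrix_mult_def mat_def)
  have "A y $ k $ l * (B k l y + B l k y) = 2 * (A y $ k $ l * B l k y)" for k l
    using B_symmetric[OF assms, of k l] by simp
  then have "(\<Sum>k\<in>UNIV. \<Sum>l\<in>UNIV. A y $ k $ l * (B k l y + B l k y))
      = (\<Sum>k\<in>UNIV. 2 * (\<Sum>l\<in>UNIV. A y $ k $ l * B l k y))"
    by (simp only: sum_distrib_left)
  then show ?thesis
    by (simp add: diagonal)
qed

lemma B_has_frechet_derivative:
  "y \<in> \<Omega> \<Longrightarrow> (B a c has_derivative frechet_derivative (B a c) (at y)) (at y)"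
  by (rule Ck_on_has_derivative[OF Ck_B open_domain])

lemma dB_has_frechet_derivative:
  "y \<in> \<Omega> \<Longrightarrow> (dB j a c has_derivative frechet_derivative (dB j a c) (at y)) (at y)"
  by (rule Ck_on_has_derivative[OF Ck_dB open_domain])

lemma psi_eq_quadratic_form:
  "psi A x = (\<lambda>y. \<Sum>a\<in>UNIV. \<Sum>c\<in>UNIV. B a c y * (y - x) $ c * (y - x) $ a)"
  by (simp add: fun_eq_iff psi_def B_def inner_vec_def matrix_vector_mult_def sum_distrib_right
      mult.assoc)

definition dpsi :: "2 \<Rightarrow> real^2 \<Rightarrow> real^2 \<Rightarrow> real" where
  "dpsi j x y = (\<Sum>a\<in>UNIV. \<Sum>c\<in>UNIV. dB j a c y * (y - x) $ c * (y - x) $ a)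
     + (\<Sum>a\<in>UNIV. (B a j y + B j a y) * (y - x) $ a)"

definition Rpsi :: "2 \<Rightarrow> 2 \<Rightarrow> real^2 \<Rightarrow> real^2 \<Rightarrow> real" where
  "Rpsi i j x y = (\<Sum>a\<in>UNIV. \<Sum>c\<in>UNIV. ddB i j a c y * (y - x) $ c * (y - x) $ a)
     + (\<Sum>a\<in>UNIV. (dB j a i y + dB j i a y + dB i a j y + dB i j a y) * (y - x) $ a)"

lemma has_derivative_psi:
  assumes "y \<in> \<Omega>"
  shows "(psi A x has_derivative (\<lambda>h. \<Sum>a\<in>UNIV. \<Sum>c\<in>UNIV. B a c y * (y - x) $ c * h $ a
      + (B a c y * h $ c + frechet_derivative (B a c) (at y) h * (y - x) $ c) * (y - x) $ a))
    (at y)"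
  unfolding psi_eq_quadratic_form
  by (intro has_derivative_sum has_derivative_mult has_derivative_diff_component
      B_has_frechet_derivative assms)

lemma partial_deriv_psi:
  assumes "y \<in> \<Omega>"
  shows "partial_deriv (psi A x) j y = dpsi j x y"
  using partial_deriv_eq[OF has_derivative_psi[OF assms, of x], of j] exhaust_2[of j]
  by (auto simp: dpsi_def dB_def partial_deriv_def sum_2 axis_def algebra_simps)

lemma has_derivative_dpsi:
  assumes "y \<in> \<Omega>"
  shows "(dpsi j x has_derivative (\<lambda>h.
      (\<Sum>a\<in>UNIV. \<Sum>c\<in>UNIV. dB j a c y * (y - x) $ c * h $ a
        + (dB j a c y * h $ c + frechet_derivative (dB j a c) (at y) h * (y - x) $ c) * (y - x) $ a)
      + (\<Sum>a\<in>UNIV. (B a j y + B j a y) * h $ a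
        + (frechet_derivative (B a j) (at y) h + frechet_derivative (B j a) (at y) h)
          * (y - x) $ a)))
    (at y)"
  unfolding dpsi_def[abs_def]
  by (intro has_derivative_add has_derivative_sum has_derivative_mult has_derivative_diff_component
      B_has_frechet_derivative dB_has_frechet_derivative assms)

lemma partial_deriv_dpsi:
  assumes "y \<in> \<Omega>"
  shows "partial_deriv (dpsi j x) i y = B i j y + B j i y + Rpsi i j x y"
  using partial_deriv_eq[OF has_derivative_dpsi[OF assms, of j x], of i]
    exhaust_2[of i] exhaust_2[of j]
  by (auto simp: Rpsi_def dB_def ddB_def partial_deriv_def sum_2 axis_def algebra_simps)

lemma psi_has_frechet_derivative:
  "y \<in> \<Omega> \<Longrightarrow> (psi A x has_derivative frechet_derivative (psi A x) (at y)) (at y)"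
  using has_derivative_psi frechet_derivative_works differentiableI by blast

lemma dpsi_has_frechet_derivative:
  "y \<in> \<Omega> \<Longrightarrow> (dpsi j x has_derivative frechet_derivative (dpsi j x) (at y)) (at y)"
  using has_derivative_dpsi frechet_derivative_works differentiableI by blast

lemma A_entry_has_frechet_derivative:
  "y \<in> \<Omega> \<Longrightarrow> ((\<lambda>z. A z $ i $ k) has_derivative frechet_derivative (\<lambda>z. A z $ i $ k) (at y)) (at y)"
  by (rule Ck_on_has_derivative[OF Ck_A_entry open_domain])

lemma psi_eq_coercive_form:
  fixes x y :: "real^2"
  assumes "y \<in> \<Omega>"
  defines "\<xi> \<equiv> matrix_inv (A y) *v (y - x)"
  shows "A y *v \<xi> = y - x" "psi A x y = (A y *v \<xi>) \<bullet> \<xi>"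
proof -
  show "A y *v \<xi> = y - x"
    unfolding \<xi>_def
    by (simp add: matrix_vector_mul_assoc matrix_mult_matrix_inv[OF det_A_neq_0[OF assms(1)]])
  then show "psi A x y = (A y *v \<xi>) \<bullet> \<xi>"
    by (simp add: psi_def \<xi>_def inner_commute)
qed

lemma psi_pos:
  assumes "y \<in> \<Omega>" "x \<noteq> y"
  shows "0 < psi A x y"
proof -
  obtain lam where "0 < lam" and coercive: "\<And>\<xi>. lam * (norm \<xi>)\<^sup>2 \<le> (A y *v \<xi>) \<bullet> \<xi>"
    using elliptic_A assms(1) unfolding uniformly_elliptic_def by blast
  let ?\<xi> = "matrix_inv (A y) *v (y - x)"
  have "?\<xi> \<noteq> 0"
    using psi_eq_coercive_form(1)[OF assms(1), of x] assms(2) by auto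
  then have "0 < lam * (norm ?\<xi>)\<^sup>2"
    using \<open>0 < lam\<close> by simp
  then show ?thesis
    using coercive[of ?\<xi>] psi_eq_coercive_form(2)[OF assms(1), of x] by linarith
qed

lemma psi_lower_bound_pointwise:
  assumes "y \<in> \<Omega>" "0 < lam" "\<And>\<xi>. lam * (norm \<xi>)\<^sup>2 \<le> (A y *v \<xi>) \<bullet> \<xi>"
    and "(\<Sum>i\<in>UNIV. \<Sum>j\<in>UNIV. \<bar>A y $ i $ j\<bar>) \<le> K" "0 < K"
  shows "lam / K\<^sup>2 * (dist x y)\<^sup>2 \<le> psi A x y"
proof -
  let ?\<xi> = "matrix_inv (A y) *v (y - x)"
  have "dist x y = norm (A y *v ?\<xi>)"
    by (simp add: psi_eq_coercive_form(1)[OF assms(1)] dist_norm norm_minus_commute)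
  also have "\<dots> \<le> onorm ((*v) (A y)) * norm ?\<xi>"
    by (rule onorm[OF matrix_vector_mul_bounded_linear])
  also have "\<dots> \<le> K * norm ?\<xi>"
    using onorm_le_matrix_component_sum[of "A y"] assms(4) by (intro mult_right_mono) auto
  finally have "(dist x y)\<^sup>2 \<le> K\<^sup>2 * (norm ?\<xi>)\<^sup>2"
    by (metis power_mono power_mult_distrib zero_le_dist)
  then have "lam / K\<^sup>2 * (dist x y)\<^sup>2 \<le> lam * (norm ?\<xi>)\<^sup>2"
    using assms(2,5) by (simp add: field_simps)
  also have "\<dots> \<le> psi A x y"
    using assms(3)[of ?\<xi>] psi_eq_coercive_form(2)[OF assms(1), of x] by simp
  finally show ?thesis .
qed

lemma psi_lower_bound:
  assumes "p \<in> \<Omega> \<times> \<Omega>"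
  shows "\<exists>c>0. \<forall>\<^sub>F q in nhds p. q \<in> \<Omega> \<times> \<Omega> \<longrightarrow> c * dist (fst q) (snd q) ^ 2 \<le> psi A (fst q) (snd q)"
proof -
  obtain lam where "0 < lam" and coercive: "\<And>y \<xi>. y \<in> \<Omega> \<Longrightarrow> lam * (norm \<xi>)\<^sup>2 \<le> (A y *v \<xi>) \<bullet> \<xi>"
    using elliptic_A unfolding uniformly_elliptic_def by blast
  have "continuous_on \<Omega> (\<lambda>y. \<Sum>i\<in>UNIV. \<Sum>j\<in>UNIV. \<bar>A y $ i $ j\<bar>)"
    using Ck_A_entry[of 0] by (intro continuous_on_sum continuous_on_rabs) auto
  then have "diag_bigo (\<Omega> \<times> \<Omega>) 0 (\<lambda>q. \<Sum>i\<in>UNIV. \<Sum>j\<in>UNIV. \<bar>A (snd q) $ i $ j\<bar>)"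
    by (rule diag_bigo_compose_snd) auto
  then obtain C where "\<forall>\<^sub>F q in nhds p. q \<in> \<Omega> \<times> \<Omega> \<longrightarrow>
      norm (\<Sum>i\<in>UNIV. \<Sum>j\<in>UNIV. \<bar>A (snd q) $ i $ j\<bar>) \<le> C * dist (fst q) (snd q) ^ 0"
    using assms unfolding diag_bigo_def by blast
  then have "\<forall>\<^sub>F q in nhds p. q \<in> \<Omega> \<times> \<Omega> \<longrightarrow>
      lam / (\<bar>C\<bar> + 1)\<^sup>2 * dist (fst q) (snd q) ^ 2 \<le> psi A (fst q) (snd q)"
  proof eventually_elim
    case (elim q)
    show ?case
    proof
      assume "q \<in> \<Omega> \<times> \<Omega>"
      then show "lam / (\<bar>C\<bar> + 1)\<^sup>2 * dist (fst q) (snd q) ^ 2 \<le> psi A (fst q) (snd q)"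
        using elim by (intro psi_lower_bound_pointwise \<open>0 < lam\<close> coercive) auto
    qed
  qed
  then show ?thesis
    using \<open>0 < lam\<close> by (intro exI[of _ "lam / (\<bar>C\<bar> + 1)\<^sup>2"]) auto
qed

lemma partial_deriv_psi_log_psi:
  assumes "y \<in> \<Omega>" "x \<noteq> y"
  shows "partial_deriv (psi_log_psi x) j y = dpsi j x y * (ln (psi A x y) + 1)"
proof -
  have "(psi_log_psi x has_derivative (\<lambda>h. psi A x y * (frechet_derivative (psi A x) (at y) h
      * inverse (psi A x y)) + frechet_derivative (psi A x) (at y) h * ln (psi A x y))) (at y)"
    by (intro has_derivative_mult has_derivative_ln psi_has_frechet_derivative psi_pos assms)
  from partial_deriv_eq[OF this, of j] show ?thesis
    using partial_deriv_psi[OF assms(1), of x j, unfolded partial_deriv_def] psi_pos[OF assms]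
    by (simp add: field_simps)
qed

lemma hessian_psi_log_psi:
  assumes "y \<in> \<Omega>" "x \<noteq> y"
  shows "hessian (psi_log_psi x) y $ i $ j =
    (B i j y + B j i y + Rpsi i j x y) * (ln (psi A x y) + 1) + dpsi j x y * dpsi i x y / psi A x y"
proof -
  have "((\<lambda>z. dpsi j x z * (ln (psi A x z) + 1)) has_derivative (\<lambda>h. dpsi j x y *
      (frechet_derivative (psi A x) (at y) h * inverse (psi A x y) + 0)
      + frechet_derivative (dpsi j x) (at y) h * (ln (psi A x y) + 1))) (at y)"
    by (intro has_derivative_mult has_derivative_add has_derivative_ln has_derivative_const
        psi_has_frechet_derivative dpsi_has_frechet_derivative psi_pos assms)
  moreover have "partial_deriv (psi_log_psi x) j z = dpsi j x z * (ln (psi A x z) + 1)"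
    if "z \<in> \<Omega> - {x}" for z
    using partial_deriv_psi_log_psi that by auto
  ultimately have "partial_deriv (\<lambda>z. partial_deriv (psi_log_psi x) j z) i y =
      dpsi j x y * (frechet_derivative (psi A x) (at y) (axis i 1) * inverse (psi A x y) + 0)
      + frechet_derivative (dpsi j x) (at y) (axis i 1) * (ln (psi A x y) + 1)"
    using assms
    by (intro partial_deriv_transform_open[of "\<Omega> - {x}"]) (auto simp: open_Diff open_domain)
  then show ?thesis
    using partial_deriv_psi[OF assms(1), of x i, unfolded partial_deriv_def]
      partial_deriv_dpsi[OF assms(1), of j x i, unfolded partial_deriv_def] psi_pos[OF assms]
    by (simp add: hessian_def field_simps)
qed

lemma divergence_flux_psi_log_psi:
  assumes "y \<in> \<Omega>" "x \<noteq> y"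
  shows "partial_deriv (\<lambda>z. (A z *v gradient (psi_log_psi x) z) $ k) k y =
    (\<Sum>l\<in>UNIV. dA k l y * dpsi l x y * (ln (psi A x y) + 1) + A y $ k $ l *
      ((B k l y + B l k y + Rpsi k l x y) * (ln (psi A x y) + 1)
        + dpsi l x y * dpsi k x y / psi A x y))"
proof -
  have "((\<lambda>z. \<Sum>l\<in>UNIV. A z $ k $ l * (dpsi l x z * (ln (psi A x z) + 1))) has_derivative
      (\<lambda>h. \<Sum>l\<in>UNIV. A y $ k $ l * (dpsi l x y *
        (frechet_derivative (psi A x) (at y) h * inverse (psi A x y) + 0)
        + frechet_derivative (dpsi l x) (at y) h * (ln (psi A x y) + 1))
      + frechet_derivative (\<lambda>z. A z $ k $ l) (at y) h * (dpsi l x y * (ln (psi A x y) + 1))))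
    (at y)"
    by (intro has_derivative_sum has_derivative_mult has_derivative_add has_derivative_ln
        has_derivative_const A_entry_has_frechet_derivative psi_has_frechet_derivative
        dpsi_has_frechet_derivative psi_pos assms)
  moreover have "(A z *v gradient (psi_log_psi x) z) $ k =
      (\<Sum>l\<in>UNIV. A z $ k $ l * (dpsi l x z * (ln (psi A x z) + 1)))" if "z \<in> \<Omega> - {x}" for z
    using partial_deriv_psi_log_psi that by (auto simp: matrix_vector_mult_def gradient_def)
  ultimately have "partial_deriv (\<lambda>z. (A z *v gradient (psi_log_psi x) z) $ k) k y =
      (\<Sum>l\<in>UNIV. A y $ k $ l * (dpsi l x y *
        (frechet_derivative (psi A x) (at y) (axis k 1) * inverse (psi A x y) + 0)
        + frechet_derivative (dpsi l x) (at y) (axis k 1) * (ln (psi A x y) + 1))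
      + frechet_derivative (\<lambda>z. A z $ k $ l) (at y) (axis k 1)
        * (dpsi l x y * (ln (psi A x y) + 1)))"
    using assms
    by (intro partial_deriv_transform_open[of "\<Omega> - {x}"]) (auto simp: open_Diff open_domain)
  then show ?thesis
    using partial_deriv_psi[OF assms(1), of x k, unfolded partial_deriv_def]
      partial_deriv_dpsi[OF assms(1), of _ x k, unfolded partial_deriv_def] psi_pos[OF assms]
    by (simp add: dA_def partial_deriv_def field_simps)
qed

definition quot_coeff :: "2 \<Rightarrow> 2 \<Rightarrow> real^2 \<Rightarrow> real^2 \<Rightarrow> real" where
  "quot_coeff i j x y = dpsi i x y * dpsi j x y
     - B i j y / 2 * (\<Sum>k\<in>UNIV. \<Sum>l\<in>UNIV. A y $ k $ l * dpsi l x y * dpsi k x y)"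

definition log_coeff :: "2 \<Rightarrow> 2 \<Rightarrow> real^2 \<Rightarrow> real^2 \<Rightarrow> real" where
  "log_coeff i j x y = Rpsi i j x y
     - B i j y / 2 * (\<Sum>k\<in>UNIV. \<Sum>l\<in>UNIV. A y $ k $ l * Rpsi k l x y + dA k l y * dpsi l x y)"

definition offdiag :: "((real^2) \<times> (real^2)) set" where
  "offdiag = \<Omega> \<times> \<Omega> - {(x, x) | x. x \<in> \<Omega>}"

definition remainder :: "(real^2) \<times> (real^2) \<Rightarrow> real^2^2" where
  "remainder q = (if q \<in> offdiag then (\<chi> i j.
     quot_coeff i j (fst q) (snd q) / psi A (fst q) (snd q)
     + log_coeff i j (fst q) (snd q) * (ln (psi A (fst q) (snd q)) + 1)) else 0)"

lemma hessian_decomposition: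
  assumes "x \<in> \<Omega>" "y \<in> \<Omega>" "x \<noteq> y"
  shows "hessian (psi_log_psi x) y =
    ((1 / sqrt 2) * divergence (\<lambda>z. A z *v gradient (psi_log_psi x) z) y)
      *\<^sub>R ((1 / sqrt 2) *\<^sub>R matrix_inv (A y)) + remainder (x, y)"
proof -
  have "1 / sqrt 2 * (1 / sqrt 2) = (1 / 2 :: real)"
    by (simp add: field_simps)
  moreover have "(x, y) \<in> offdiag"
    using assms by (auto simp: offdiag_def)
  ultimately show ?thesis
    using log_singularity_cancellation[OF B_symmetric[OF assms(2)] trace_A_B[OF assms(2)]
        psi_pos[OF assms(2,3), THEN less_imp_neq, symmetric], where P="\<lambda>k. dpsi k x y"
        and R="\<lambda>k l. Rpsi k l x y" and d="\<lambda>k l. dA k l y" and L="ln (psi A x y) + 1"]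
    by (simp add: vec_eq_iff hessian_psi_log_psi[OF assms(2,3)] divergence_def
        divergence_flux_psi_log_psi[OF assms(2,3)] remainder_def quot_coeff_def log_coeff_def B_def
        algebra_simps)
qed

lemma open_offdiag: "open offdiag"
proof -
  have "offdiag = \<Omega> \<times> \<Omega> \<inter> {q. fst q \<noteq> snd q}"
    by (auto simp: offdiag_def)
  then show ?thesis
    using open_domain by (auto intro!: open_Int open_Times open_Collect_neq continuous_intros)
qed

lemma mem_offdiag: "q \<in> offdiag \<longleftrightarrow> q \<in> \<Omega> \<times> \<Omega> \<and> fst q \<noteq> snd q"
  by (cases q) (auto simp: offdiag_def)

lemma Ck_on_snd:
  "Ck_on k \<Omega> g \<Longrightarrow> Ck_on k (\<Omega> \<times> \<Omega>) (\<lambda>q. g (snd q))"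
  using open_domain by (intro Ck_on_compose_snd) (auto simp: open_Times)

lemma Ck_on_diff_component: "open S \<Longrightarrow> Ck_on k S (\<lambda>q. (snd q - fst q) $ c)"
  by (intro Ck_on_bounded_linear bounded_linear_compose[OF bounded_linear_vec_nth]
      bounded_linear_sub bounded_linear_fst bounded_linear_snd)

lemmas Ck_on_coefficients = Ck_on_snd[OF Ck_B] Ck_on_snd[OF Ck_dB] Ck_on_snd[OF Ck_ddB]
  Ck_on_snd[OF Ck_A_entry] Ck_on_snd[OF Ck_dA]

lemma Ck_on_psi: "Ck_on k (\<Omega> \<times> \<Omega>) (\<lambda>q. psi A (fst q) (snd q))"
  unfolding psi_eq_quadratic_form using open_domain
  by (intro Ck_on_sum Ck_on_mult Ck_on_coefficients Ck_on_diff_component open_Times)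

lemma Ck_on_dpsi: "Ck_on k (\<Omega> \<times> \<Omega>) (\<lambda>q. dpsi j (fst q) (snd q))"
  unfolding dpsi_def using open_domain
  by (intro Ck_on_add Ck_on_sum Ck_on_mult Ck_on_coefficients Ck_on_diff_component open_Times)

lemma Ck_on_Rpsi: "Ck_on k (\<Omega> \<times> \<Omega>) (\<lambda>q. Rpsi i j (fst q) (snd q))"
  unfolding Rpsi_def using open_domain
  by (intro Ck_on_add Ck_on_sum Ck_on_mult Ck_on_coefficients Ck_on_diff_component open_Times)

lemma Ck_on_quot_coeff: "Ck_on k (\<Omega> \<times> \<Omega>) (\<lambda>q. quot_coeff i j (fst q) (snd q))"
  unfolding quot_coeff_def divide_inverse using open_domain
  by (intro Ck_on_diff Ck_on_sum Ck_on_mult Ck_on_const Ck_on_dpsi Ck_on_coefficients open_Times)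

lemma Ck_on_log_coeff: "Ck_on k (\<Omega> \<times> \<Omega>) (\<lambda>q. log_coeff i j (fst q) (snd q))"
  unfolding log_coeff_def divide_inverse using open_domain
  by (intro Ck_on_diff Ck_on_add Ck_on_sum Ck_on_mult Ck_on_const Ck_on_dpsi Ck_on_Rpsi
      Ck_on_coefficients open_Times)

lemma smooth_on_remainder: "smooth_on offdiag remainder"
  unfolding smooth_on_def
proof
  fix k
  have restrict: "Ck_on k offdiag f" if "Ck_on k (\<Omega> \<times> \<Omega>) f" for f :: "_ \<Rightarrow> real"
    using Ck_on_subset[OF that _ open_offdiag] open_domain by (auto simp: open_Times offdiag_def)
  have pos: "0 < psi A (fst q) (snd q)" if "q \<in> offdiag" for q
    using that by (auto simp: mem_offdiag intro: psi_pos)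
  have "Ck_on k offdiag (\<lambda>q. quot_coeff i j (fst q) (snd q) * inverse (psi A (fst q) (snd q))
      + log_coeff i j (fst q) (snd q) * (ln (psi A (fst q) (snd q)) + 1))" for i j
    using open_offdiag
    by (intro Ck_on_add Ck_on_mult Ck_on_inverse Ck_on_ln Ck_on_const restrict
        Ck_on_quot_coeff Ck_on_log_coeff Ck_on_psi) (auto dest: pos)
  then have "Ck_on k offdiag (\<lambda>q. \<chi> i j.
      quot_coeff i j (fst q) (snd q) * inverse (psi A (fst q) (snd q))
      + log_coeff i j (fst q) (snd q) * (ln (psi A (fst q) (snd q)) + 1))"
    by (simp add: Ck_on_vec_iff[OF open_offdiag])
  then show "Ck_on k offdiag remainder"
    by (rule Ck_on_cong[OF open_offdiag, rotated]) (simp add: remainder_def divide_inverse)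
qed

lemma remainder_measurable: "remainder \<in> borel_measurable (restrict_space borel (\<Omega> \<times> \<Omega>))"
proof -
  have "continuous_on offdiag remainder"
    using smooth_on_remainder unfolding smooth_on_def by (metis Ck_on.simps(1))
  then have "(\<lambda>q. if q \<in> offdiag then remainder q else 0) \<in> borel_measurable borel"
    using open_offdiag by (intro borel_measurable_continuous_on_if continuous_on_const) auto
  also have "(\<lambda>q. if q \<in> offdiag then remainder q else 0) = remainder"
    by (auto simp: remainder_def)
  finally show ?thesis
    by (rule measurable_restrict_space1)
qed

lemma diag_bigo_snd: "continuous_on \<Omega> g \<Longrightarrow> diag_bigo (\<Omega> \<times> \<Omega>) 0 (\<lambda>q. g (snd q))"
  by (rule diag_bigo_compose_snd) auto

lemma continuous_on_coefficients:
  "continuous_on \<Omega> (B a c)" "continuous_on \<Omega> (dB j a c)" "continuous_on \<Omega> (ddB i j a c)"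
  "continuous_on \<Omega> (\<lambda>y. A y $ i $ j)" "continuous_on \<Omega> (dA i j)"
  using Ck_B[of 0] Ck_dB[of 0] Ck_ddB[of 0] Ck_A_entry[of 0] Ck_dA[of 0] by simp_all

lemmas diag_bigo_coefficients = continuous_on_coefficients[THEN diag_bigo_snd]

lemma diag_bigo_psi: "diag_bigo (\<Omega> \<times> \<Omega>) 2 (\<lambda>q. psi A (fst q) (snd q))"
  unfolding psi_eq_quadratic_form by (intro diag_bigo_quadratic_form diag_bigo_coefficients)

lemma diag_bigo_dpsi: "diag_bigo (\<Omega> \<times> \<Omega>) 1 (\<lambda>q. dpsi j (fst q) (snd q))"
  unfolding dpsi_def
  by (intro diag_bigo_add diag_bigo_mono[OF diag_bigo_quadratic_form, of _ _ 1]
      diag_bigo_linear_form diag_bigo_coefficients) simp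

lemma diag_bigo_Rpsi: "diag_bigo (\<Omega> \<times> \<Omega>) 1 (\<lambda>q. Rpsi i j (fst q) (snd q))"
  unfolding Rpsi_def
  by (intro diag_bigo_add diag_bigo_mono[OF diag_bigo_quadratic_form, of _ _ 1]
      diag_bigo_linear_form diag_bigo_coefficients) simp

lemma diag_bigo_half_B: "diag_bigo (\<Omega> \<times> \<Omega>) 0 (\<lambda>q. B i j (snd q) / 2)"
  using continuous_on_coefficients(1) by (intro diag_bigo_snd continuous_intros) auto

lemma diag_bigo_quot_coeff: "diag_bigo (\<Omega> \<times> \<Omega>) 2 (\<lambda>q. quot_coeff i j (fst q) (snd q))"
proof -
  have "diag_bigo (\<Omega> \<times> \<Omega>) 2
      (\<lambda>q. \<Sum>k\<in>UNIV. \<Sum>l\<in>UNIV. A (snd q) $ k $ l * dpsi l (fst q) (snd q) * dpsi k (fst q) (snd q))"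
    using diag_bigo_mult[OF
        diag_bigo_mult[OF diag_bigo_coefficients(4) diag_bigo_dpsi] diag_bigo_dpsi,
        unfolded add_0_left one_add_one]
    by (intro diag_bigo_sum)
  from diag_bigo_mult[OF diag_bigo_half_B this, unfolded add_0_left]
  show ?thesis
    unfolding quot_coeff_def
    by (rule diag_bigo_diff[OF
          diag_bigo_mult[OF diag_bigo_dpsi diag_bigo_dpsi, unfolded one_add_one]])
qed

lemma diag_bigo_log_coeff: "diag_bigo (\<Omega> \<times> \<Omega>) 1 (\<lambda>q. log_coeff i j (fst q) (snd q))"
proof -
  have "diag_bigo (\<Omega> \<times> \<Omega>) 1 (\<lambda>q. \<Sum>k\<in>UNIV. \<Sum>l\<in>UNIV.
      A (snd q) $ k $ l * Rpsi k l (fst q) (snd q) + dA k l (snd q) * dpsi l (fst q) (snd q))"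
    using diag_bigo_mult[OF diag_bigo_coefficients(4) diag_bigo_Rpsi, unfolded add_0_left]
      diag_bigo_mult[OF diag_bigo_coefficients(5) diag_bigo_dpsi, unfolded add_0_left]
    by (intro diag_bigo_sum diag_bigo_add)
  from diag_bigo_mult[OF diag_bigo_half_B this, unfolded add_0_left]
  show ?thesis
    unfolding log_coeff_def by (rule diag_bigo_diff[OF diag_bigo_Rpsi])
qed

lemma locally_bounded_remainder: "locally_bounded_on (\<Omega> \<times> \<Omega>) remainder"
proof (intro locally_bounded_on_if_diag_bigo diag_bigo_vec)
  fix i j
  show "diag_bigo (\<Omega> \<times> \<Omega>) 0 (\<lambda>q. remainder q $ i $ j)"
    by (rule diag_bigo_log_quotient[OF _ diag_bigo_quot_coeff diag_bigo_log_coeff diag_bigo_psi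
        psi_lower_bound]) (auto simp: remainder_def mem_offdiag)
qed

end

theorem lemma3p5:
  fixes \<Omega> :: "(real^2) set" and A :: "real^2 \<Rightarrow> real^2^2"
  assumes "smooth_bounded_domain \<Omega>"
    and "smooth_on_closure \<Omega> A"
    and "\<forall>y\<in>closure \<Omega>. transpose (A y) = A y"
    and "uniformly_elliptic (closure \<Omega>) A"
  shows "\<exists>M0 :: real^2 \<Rightarrow> real^2^2. \<exists>N0 :: (real^2) \<times> (real^2) \<Rightarrow> real^2^2.
     smooth_on_closure \<Omega> M0 \<and>
     N0 \<in> borel_measurable (restrict_space borel (\<Omega> \<times> \<Omega>)) \<and>
     locally_bounded_on (\<Omega> \<times> \<Omega>) N0 \<and>
     smooth_on (\<Omega> \<times> \<Omega> - {(x, x) | x. x \<in> \<Omega>}) N0 \<and>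
     (\<forall>x\<in>\<Omega>. \<forall>y\<in>\<Omega>. x \<noteq> y \<longrightarrow>
        hessian (\<lambda>z. psi A x z * ln (psi A x z)) y =
          ((1 / sqrt 2) * divergence (\<lambda>z. A z *v gradient (\<lambda>w. psi A x w * ln (psi A x w)) z) y)
            *\<^sub>R M0 y + N0 (x, y)) \<and>
     (\<forall>x\<in>\<Omega>. M0 x = (1 / sqrt 2) *\<^sub>R matrix_inv (A x))"
proof -
  have "open \<Omega>"
    using assms(1) unfolding smooth_bounded_domain_def by blast
  interpret elliptic_field \<Omega> A
  proof
    show "smooth_on \<Omega> A"
      by (rule smooth_on_closure_imp_smooth_on[OF \<open>open \<Omega>\<close> assms(2)])
    show "uniformly_elliptic \<Omega> A"
      by (rule uniformly_elliptic_subset[OF assms(4) closure_subset])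
  qed (use \<open>open \<Omega>\<close> assms(3) closure_subset in auto)
  have "det (A y) \<noteq> 0" if "y \<in> closure \<Omega>" for y
    using assms(4) that unfolding uniformly_elliptic_def by (metis det_neq_0_if_coercive)
  then have "smooth_on_closure \<Omega> (\<lambda>y. (1 / sqrt 2) *\<^sub>R matrix_inv (A y))"
    by (rule smooth_on_closure_matrix_inv_2x2[OF assms(2)])
  moreover have "smooth_on (\<Omega> \<times> \<Omega> - {(x, x) | x. x \<in> \<Omega>}) remainder"
    using smooth_on_remainder by (simp add: offdiag_def)
  ultimately show ?thesis
    using remainder_measurable locally_bounded_remainder hessian_decomposition by blast
qed

end
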